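(* Let $f:\mathbb Z^m\to\mathbb R^N$ be a discrete isothermic net. Then there exists a function $s:\mathbb Z^m\to\mathbb R\setminus\{0\}$ such that for every elementary quadrilateral $(f,f_i,f_{ij},f_j)$ with diagonal intersection point $M$, $$\frac{l(M,f_{ij})}{l(M,f)}=\frac{s_{ij}}{s},\qquad \frac{l(M,f_j)}{l(M,f_i)}=\frac{s_j}{s_i};$$ $s$ is unique up to multiplication by a nonzero constant $\lambda$ on black points and a nonzero constant $\mu$ on white points. For any such $s$, the functions $\alpha_i=\dfrac{|f_i-f|^2}{s s_i}$ (assigned to the edge $(u,u+e_i)$) form an edge labelling, i.e. $\tau_j\alpha_i=\alpha_i$ for $j\ne i$, so that $$|f_i-f|^2=\alpha_i\, s s_i\qquad(i=1,\dots,m).$$ Replacing $s$ by $\lambda s$ on black points and $\mu s$ on white points replaces $\alpha$ by $(\lambda\mu)^{-1}\alpha$.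
   Context: Notation: for $f:\mathbb Z^m\to\mathbb R^N$, $f=f(u)$, $f_i=f(u+e_i)$, $f_{ij}=f(u+e_i+e_j)$ with $e_i$ the unit vectors, similarly for $s$; $\tau_j g(u)=g(u+e_j)$. A Q-net is a map such that each elementary quadrilateral $(f,f_i,f_{ij},f_j)$ ($i\ne j$) is planar, assumed non-degenerate (distinct vertices, no three collinear, diagonals meeting in a point $M$ distinct from the vertices). Two planar quadrilaterals $(A,B,C,D)$, $(A^*,B^*,C^*,D^* )$ are dual if $A^*B^*\parallel AB$, $B^*C^*\parallel BC$, $C^*D^*\parallel CD$, $D^*A^*\parallel DA$, $A^*C^*\parallel BD$, $B^*D^*\parallel AC$. A Q-net $f$ is a discrete Koenigs net if there is a Q-net $f^*$ with every $(f^*,f^*_i,f^*_{ij},f^*_j)$ dual to $(f,f_i,f_{ij},f_j)$. A circular net is a Q-net all of whose elementary quadrilaterals have their four vertices on a circle. A discrete isothermic net is a circular net which is a discrete Koenigs net. For collinear points $P,Q$, $l(P,Q)$ is the directed (signed) length along their line. A point $u$ is black if $u_1+\dots+u_m$ is even, white otherwise. An edge labelling is a system of real functions $\alpha_i$ on the edges parallel to the $i$-th axis, taking equal values on opposite edges of every elementary square. *)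

theory Defs
  imports "HOL-Analysis.Analysis"
begin

text \<open>Lattice points of Z^m are elements of int^'m (index type 'm finite, m = CARD('m));
  points of R^N are elements of real^'n.\<close>

definition unitv :: "'m::finite \<Rightarrow> int^'m" where
  "unitv i = axis i 1"

definition black :: "int^'m::finite \<Rightarrow> bool" where
  "black u \<longleftrightarrow> even (\<Sum>k\<in>UNIV. u $ k)"

definition diag_point :: "real^'n \<Rightarrow> real^'n \<Rightarrow> real^'n \<Rightarrow> real^'n \<Rightarrow> real^'n" where
  "diag_point A B C D = (THE M. M \<in> affine hull {A, C} \<and> M \<in> affine hull {B, D})"

definition nondeg_planar_quad :: "real^'n \<Rightarrow> real^'n \<Rightarrow> real^'n \<Rightarrow> real^'n \<Rightarrow> bool" where
  "nondeg_planar_quad A B C D \<longleftrightarrow>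
     aff_dim {A, B, C, D} \<le> 2 \<and>
     distinct [A, B, C, D] \<and>
     \<not> collinear {A, B, C} \<and> \<not> collinear {A, B, D} \<and>
     \<not> collinear {A, C, D} \<and> \<not> collinear {B, C, D} \<and>
     (\<exists>M. M \<in> affine hull {A, C} \<and> M \<in> affine hull {B, D} \<and> M \<notin> {A, B, C, D})"

definition Qnet :: "(int^'m::finite \<Rightarrow> real^'n) \<Rightarrow> bool" where
  "Qnet f \<longleftrightarrow> (\<forall>u i j. i \<noteq> j \<longrightarrow>
     nondeg_planar_quad (f u) (f (u + unitv i)) (f (u + unitv i + unitv j)) (f (u + unitv j)))"

definition par :: "real^'n \<Rightarrow> real^'n \<Rightarrow> bool" where
  "par v w \<longleftrightarrow> collinear {0, v, w}"

definition dual_quad :: "real^'n \<Rightarrow> real^'n \<Rightarrow> real^'n \<Rightarrow> real^'n \<Rightarrow>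
    real^'n \<Rightarrow> real^'n \<Rightarrow> real^'n \<Rightarrow> real^'n \<Rightarrow> bool" where
  "dual_quad A B C D A' B' C' D' \<longleftrightarrow>
     par (B' - A') (B - A) \<and> par (C' - B') (C - B) \<and> par (D' - C') (D - C) \<and>
     par (A' - D') (A - D) \<and> par (C' - A') (D - B) \<and> par (D' - B') (C - A)"

definition koenigs :: "(int^'m::finite \<Rightarrow> real^'n) \<Rightarrow> bool" where
  "koenigs f \<longleftrightarrow> Qnet f \<and> (\<exists>fs :: int^'m \<Rightarrow> real^'n. Qnet fs \<and>
     (\<forall>u i j. i \<noteq> j \<longrightarrow>
        dual_quad (f u) (f (u + unitv i)) (f (u + unitv i + unitv j)) (f (u + unitv j))
                  (fs u) (fs (u + unitv i)) (fs (u + unitv i + unitv j)) (fs (u + unitv j))))"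

definition concyclic :: "real^'n \<Rightarrow> real^'n \<Rightarrow> real^'n \<Rightarrow> real^'n \<Rightarrow> bool" where
  "concyclic A B C D \<longleftrightarrow> (\<exists>c r. c \<in> affine hull {A, B, C, D} \<and>
     dist c A = r \<and> dist c B = r \<and> dist c C = r \<and> dist c D = r)"

definition circular :: "(int^'m::finite \<Rightarrow> real^'n) \<Rightarrow> bool" where
  "circular f \<longleftrightarrow> Qnet f \<and> (\<forall>u i j. i \<noteq> j \<longrightarrow>
     concyclic (f u) (f (u + unitv i)) (f (u + unitv i + unitv j)) (f (u + unitv j)))"

definition isothermic :: "(int^'m::finite \<Rightarrow> real^'n) \<Rightarrow> bool" where
  "isothermic f \<longleftrightarrow> circular f \<and> koenigs f"

text \<open>Directed length l(P,Q) along a line oriented by the direction vector d.\<close>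
definition dlen :: "real^'n \<Rightarrow> real^'n \<Rightarrow> real^'n \<Rightarrow> real" where
  "dlen d P Q = ((Q - P) \<bullet> d) / norm d"

text \<open>The ratio conditions on s: for each elementary quadrilateral,
  l(M,f_ij)/l(M,f) = s_ij/s and l(M,f_j)/l(M,f_i) = s_j/s_i, each diagonal being oriented
  by one fixed direction (the ratio does not depend on this choice).\<close>
definition ratio_cond :: "(int^'m::finite \<Rightarrow> real^'n) \<Rightarrow> (int^'m \<Rightarrow> real) \<Rightarrow> bool" where
  "ratio_cond f s \<longleftrightarrow> (\<forall>u i j. i \<noteq> j \<longrightarrow>
     (let A = f u; B = f (u + unitv i); C = f (u + unitv i + unitv j); D = f (u + unitv j);
          M = diag_point A B C D
      in dlen (C - A) M C / dlen (C - A) M A = s (u + unitv i + unitv j) / s u \<and>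
         dlen (D - B) M D / dlen (D - B) M B = s (u + unitv j) / s (u + unitv i)))"

end

theory Submission
  imports Defs
begin

text \<open>
  \<^item> Lattice combinatorics: a nonvanishing multiplicative 1-form on \<open>\<int>\<^sup>m\<close> that is closed around
    every elementary square has a potential (discrete integration, one direction at a time), and
    a function that is invariant under the steps \<open>e\<^sub>i + e\<^sub>j\<close> and constant on the neighbours of
    any point is constant on black and on white points.
  \<^item> Geometry of one quadrilateral: its diagonals meet with parameters \<open>t, r\<close>, which give the
    ratios of directed lengths \<open>(t - 1)/t\<close>, \<open>(r - 1)/r\<close>; the edges of a dual quadrilateral
    are scaled by factors determined by \<open>t, r\<close>; and in a circular quadrilateral the
    intersecting chords theorem relates opposite edges.
  \<^item> The net: the scaling factors \<open>g\<^sub>i(u)\<close> of the dual Koenigs net satisfy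
    \<open>g\<^sub>i(u) g\<^sub>i(u + e\<^sub>j) = g\<^sub>j(u) g\<^sub>j(u + e\<^sub>i)\<close>, so \<open>1/g\<^sub>i(u) = s(u) s(u + e\<^sub>i)\<close> for some \<open>s\<close>, and
    this \<open>s\<close> has the required diagonal ratios.  Two solutions differ by a factor that is
    constant on each colour class, and for a circular net the edge weights
    \<open>|f\<^sub>i - f|\<^sup>2/(s s\<^sub>i)\<close> agree on opposite edges of each quadrilateral.
\<close>

lemma unitv_nth: "unitv i $ k = (if k = i then 1 else 0)"
  by (simp add: unitv_def axis_def)

lemma black_add_unitv: "black (u + unitv i) \<longleftrightarrow> \<not> black u"
proof -
  have "(\<Sum>k\<in>UNIV. (u + unitv i) $ k) = (\<Sum>k\<in>UNIV. u $ k) + 1"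
    by (simp add: unitv_nth sum.distrib)
  then show ?thesis unfolding black_def by simp
qed

lemma unitv_commute: "u + unitv i + unitv j = u + unitv j + unitv i"
  by (simp add: add_ac)

lemma exists_other_direction:
  assumes "CARD('m::finite) \<ge> 2"
  shows "\<exists>j::'m. j \<noteq> i"
proof (rule ccontr)
  assume "\<not> ?thesis"
  then have "(UNIV::'m set) = {i}" by auto
  then have "CARD('m) = Suc 0" using card_1_singleton_iff by blast
  with assms show False by simp
qed

text \<open>Signed products over the integers: \<open>zprod F n\<close> is \<open>F 0 \<cdots> F (n - 1)\<close> for \<open>n \<ge> 0\<close> and
  \<open>(F n \<cdots> F (-1))\<inverse>\<close> for \<open>n < 0\<close>; it solves the recursion \<open>P (n + 1) = F n * P n\<close>, \<open>P 0 = 1\<close>.\<close>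
definition zprod :: "(int \<Rightarrow> real) \<Rightarrow> int \<Rightarrow> real" where
  "zprod F n = (if n \<ge> 0 then (\<Prod>t<nat n. F (int t)) else inverse (\<Prod>t<nat (-n). F (- int t - 1)))"

lemma zprod_nonzero: "(\<And>n. F n \<noteq> 0) \<Longrightarrow> zprod F n \<noteq> 0"
  by (simp add: zprod_def)

lemma zprod_step:
  assumes nz: "\<And>n. F n \<noteq> 0"
  shows "zprod F (n + 1) = F n * zprod F n"
proof (cases "n \<ge> 0")
  case True
  then have "nat (n + 1) = Suc (nat n)" by simp
  with True show ?thesis by (simp add: zprod_def mult.commute)
next
  case False
  define k where "k = nat (- (n + 1))"
  have "nat (- n) = Suc k" and "F (- int k - 1) = F n"
    using False unfolding k_def by (simp_all add: algebra_simps)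
  then have "zprod F n = inverse ((\<Prod>t<k. F (- int t - 1)) * F n)"
    using False unfolding zprod_def by simp
  moreover have "zprod F (n + 1) = inverse (\<Prod>t<k. F (- int t - 1))"
    using False unfolding zprod_def k_def by auto
  ultimately show ?thesis using nz[of n] by (simp add: field_simps)
qed

definition set_coord :: "int^'m \<Rightarrow> 'm \<Rightarrow> int \<Rightarrow> int^'m" where
  "set_coord x k n = (\<chi> l. if l = k then n else x $ l)"

text \<open>Discrete integration of a closed multiplicative 1-form \<open>G\<close> on \<open>\<int>\<^sup>m\<close>, in the directions
  of a finite set \<open>K\<close>: the potential is extended one direction at a time, correcting by a
  product along the new axis of a factor that is invariant in the old directions.\<close>
lemma discrete_potential_on:
  fixes G :: "int^'m::finite \<Rightarrow> 'm \<Rightarrow> real"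
  assumes nz: "\<And>x i. G x i \<noteq> 0"
    and closed: "\<And>x i j. G x i * G (x + unitv i) j = G x j * G (x + unitv j) i"
    and "finite K"
  shows "\<exists>h. (\<forall>x. h x \<noteq> 0) \<and> (\<forall>x. \<forall>i\<in>K. h (x + unitv i) = G x i * h x)"
  using \<open>finite K\<close>
proof (induction K rule: finite_induct)
  case empty
  show ?case by (rule exI[of _ "\<lambda>_. 1"]) simp
next
  case (insert k K)
  then obtain h where hnz: "\<And>x. h x \<noteq> 0"
    and hK: "\<And>x i. i \<in> K \<Longrightarrow> h (x + unitv i) = G x i * h x"
    by blast
  text \<open>The defect of \<open>h\<close> in direction \<open>k\<close>; closedness makes it invariant in the directions of \<open>K\<close>.\<close>
  define H where "H x = G x k * h x / h (x + unitv k)" for x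
  have Hnz: "H x \<noteq> 0" for x using nz hnz unfolding H_def by simp
  have H_inv: "H (x + unitv i) = H x" if "i \<in> K" for x i
  proof -
    have "h (x + unitv i) = G x i * h x" using hK that by blast
    moreover have "h (x + unitv i + unitv k) = G (x + unitv k) i * h (x + unitv k)"
      using hK[OF that, of "x + unitv k"] by (simp add: add_ac)
    ultimately show ?thesis unfolding H_def using nz hnz closed[of x i k]
      by (simp add: field_simps)
  qed
  define \<phi> where "\<phi> x = zprod (\<lambda>n. H (set_coord x k n)) (x $ k)" for x
  have \<phi>_inv: "\<phi> (x + unitv i) = \<phi> x" if "i \<in> K" for x i
  proof -
    have ik: "i \<noteq> k" using that insert by auto
    then have "set_coord (x + unitv i) k n = set_coord x k n + unitv i" for n
      by (simp add: set_coord_def vec_eq_iff unitv_nth)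
    with ik H_inv[OF that] show ?thesis unfolding \<phi>_def by (simp add: unitv_nth)
  qed
  have \<phi>_step: "\<phi> (x + unitv k) = H x * \<phi> x" for x
  proof -
    have "set_coord (x + unitv k) k n = set_coord x k n" for n
      by (simp add: set_coord_def vec_eq_iff unitv_nth)
    moreover have "set_coord x k (x $ k) = x"
      by (simp add: set_coord_def vec_eq_iff)
    ultimately show ?thesis unfolding \<phi>_def using zprod_step Hnz by (simp add: unitv_nth)
  qed
  have \<phi>nz: "\<phi> x \<noteq> 0" for x unfolding \<phi>_def by (rule zprod_nonzero) (use Hnz in auto)
  show ?case
  proof (intro exI[of _ "\<lambda>x. h x * \<phi> x"] conjI allI ballI)
    fix x show "h x * \<phi> x \<noteq> 0" using hnz \<phi>nz by simp
  next
    fix x i assume "i \<in> insert k K"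
    then show "h (x + unitv i) * \<phi> (x + unitv i) = G x i * (h x * \<phi> x)"
      using \<phi>_step hnz hK \<phi>_inv unfolding H_def by (auto simp: field_simps)
  qed
qed

lemma discrete_potential:
  fixes G :: "int^'m::finite \<Rightarrow> 'm \<Rightarrow> real"
  assumes "\<And>x i. G x i \<noteq> 0"
    and "\<And>x i j. G x i * G (x + unitv i) j = G x j * G (x + unitv j) i"
  shows "\<exists>h. (\<forall>x. h x \<noteq> 0) \<and> (\<forall>x i. h (x + unitv i) = G x i * h x)"
  using discrete_potential_on[OF assms, of UNIV] by auto

lemma unit_translation_invariant_const:
  fixes \<rho> :: "int^'m::finite \<Rightarrow> 'a"
  assumes inv: "\<And>x i. \<rho> (x + unitv i) = \<rho> x"
  shows "\<rho> x = \<rho> 0"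
proof -
  have axis_inv: "\<rho> (y + n *s unitv i) = \<rho> y" for y i and n :: int
  proof (induction n rule: int_induct[where k = 0])
    case (step1 n)
    then show ?case using inv[of "y + n *s unitv i" i] by (simp add: algebra_simps)
  next
    case (step2 n)
    then show ?case using inv[of "y + (n - 1) *s unitv i" i] by (simp add: algebra_simps)
  qed simp
  have "\<rho> (y + (\<Sum>i\<in>K. (x $ i) *s unitv i)) = \<rho> y" if "finite K" for K y
    using that
  proof (induction K arbitrary: y rule: finite_induct)
    case (insert k K)
    then show ?case using axis_inv[of "y + (\<Sum>i\<in>K. (x $ i) *s unitv i)"] by (simp add: add_ac)
  qed simp
  from this[of UNIV 0] show ?thesis unfolding unitv_def basis_expansion by simp
qed

lemma parity_constant:
  fixes \<phi> :: "int^'m::finite \<Rightarrow> 'a"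
  assumes nb: "\<And>x i j. \<phi> (x + unitv i) = \<phi> (x + unitv j)"
    and even: "\<And>x i j. \<phi> (x + unitv i + unitv j) = \<phi> x"
  shows "\<phi> x = (if black x then \<phi> 0 else \<phi> (unitv k))"
proof -
  have black_val: "\<psi> x = \<psi> 0"
    if "black x" and "\<And>x i j. \<psi> (x + unitv i) = \<psi> (x + unitv j)"
      and "\<And>x i j. \<psi> (x + unitv i + unitv j) = \<psi> x" for \<psi> :: "int^'m \<Rightarrow> 'a" and x
  proof -
    define \<rho> where "\<rho> y = (if black y then \<psi> y else \<psi> (y + unitv k))" for y
    have "\<rho> (y + unitv i) = \<rho> y" for y i
      unfolding \<rho>_def black_add_unitv using that(2,3) by (simp add: add_ac)
    then have "\<rho> x = \<rho> 0" by (rule unit_translation_invariant_const)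
    with \<open>black x\<close> show ?thesis unfolding \<rho>_def by (simp add: black_def)
  qed
  show ?thesis
  proof (cases "black x")
    case False
    then have "black (x - unitv k)" using black_add_unitv[of "x - unitv k" k] by simp
    have "\<phi> ((x - unitv k) + unitv k) = \<phi> (0 + unitv k)"
    proof (rule black_val[where \<psi> = "\<lambda>y. \<phi> (y + unitv k)"])
      show "\<phi> (y + unitv i + unitv k) = \<phi> (y + unitv j + unitv k)" for y i j
        using nb[of "y + unitv k" i j] by (simp add: add_ac)
      show "\<phi> (y + unitv i + unitv j + unitv k) = \<phi> (y + unitv k)" for y i j
        using even[of "y + unitv k" i j] by (simp add: add_ac)
    qed fact
    with False show ?thesis by simp
  qed (use black_val nb even in auto)
qed

definition diag_ratios :: "real^'n \<Rightarrow> real^'n \<Rightarrow> real^'n \<Rightarrow> real^'n \<Rightarrow> real \<times> real" where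
  "diag_ratios A B C D = (let M = diag_point A B C D in
     (dlen (C - A) M C / dlen (C - A) M A, dlen (D - B) M D / dlen (D - B) M B))"

lemma dlen_ratio:
  fixes A C M :: "real^'n"
  assumes M: "M = A + t *\<^sub>R (C - A)" and "A \<noteq> C" and "t \<noteq> 0"
  shows "dlen (C - A) M C / dlen (C - A) M A = (t - 1) / t"
proof -
  have "C - M = (1 - t) *\<^sub>R (C - A)" "A - M = (- t) *\<^sub>R (C - A)"
    unfolding M by (simp_all add: algebra_simps)
  then have "dlen (C - A) M C / dlen (C - A) M A
      = ((1 - t) * ((C - A) \<bullet> (C - A))) / ((- t) * ((C - A) \<bullet> (C - A)))"
    using \<open>A \<noteq> C\<close> by (simp add: dlen_def)
  also have "\<dots> = (t - 1) / t" using assms by (simp add: field_simps)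
  finally show ?thesis .
qed

lemma nondeg_quad_diagonals:
  fixes A B C D :: "real^'n"
  assumes q: "nondeg_planar_quad A B C D"
  obtains t r where "diag_point A B C D = A + t *\<^sub>R (C - A)"
    and "diag_point A B C D = B + r *\<^sub>R (D - B)"
    and "t \<noteq> 0" "t \<noteq> 1" "r \<noteq> 0" "r \<noteq> 1"
    and "\<And>p q. p *\<^sub>R (C - A) = q *\<^sub>R (D - B) \<Longrightarrow> p = 0 \<and> q = 0"
    and "diag_ratios A B C D = ((t - 1) / t, (r - 1) / r)"
proof -
  from q have distinct: "distinct [A, B, C, D]" and noncol: "\<not> collinear {A, B, C}"
    and "\<exists>M. M \<in> affine hull {A, C} \<and> M \<in> affine hull {B, D} \<and> M \<notin> {A, B, C, D}"
    unfolding nondeg_planar_quad_def by auto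
  then obtain M t r where M_AC: "M = A + t *\<^sub>R (C - A)" and M_BD: "M = B + r *\<^sub>R (D - B)"
    and M_new: "M \<notin> {A, B, C, D}"
    unfolding affine_hull_2_alt by blast
  have indep: "p = 0 \<and> q = 0" if pq: "p *\<^sub>R (C - A) = q *\<^sub>R (D - B)" for p q
  proof (rule ccontr)
    assume "\<not> (p = 0 \<and> q = 0)"
    with pq distinct have "p \<noteq> 0" by auto
    with pq have CA: "C - A = (q / p) *\<^sub>R (D - B)"
      by (metis divide_inverse_commute scaleR_scaleR right_inverse scaleR_one mult.commute)
    have "B = A + t *\<^sub>R (C - A) - r *\<^sub>R (D - B)" using M_AC M_BD by (simp add: algebra_simps)
    then have "B = A + (t * (q / p) - r) *\<^sub>R (D - B)" unfolding CA by (simp add: algebra_simps)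
    moreover have "C = A + (q / p) *\<^sub>R (D - B)" using CA by (simp add: algebra_simps)
    ultimately have "collinear {A, B, C}"
      unfolding collinear_alt by (intro exI[of _ A] exI[of _ "D - B"]) (auto intro: exI[of _ 0])
    with noncol show False ..
  qed
  have "diag_point A B C D = M"
    unfolding diag_point_def
  proof (rule the_equality)
    show "M \<in> affine hull {A, C} \<and> M \<in> affine hull {B, D}"
      unfolding affine_hull_2_alt using M_AC M_BD by blast
  next
    fix M' assume "M' \<in> affine hull {A, C} \<and> M' \<in> affine hull {B, D}"
    then obtain t' r' where M'_AC: "M' = A + t' *\<^sub>R (C - A)" and M'_BD: "M' = B + r' *\<^sub>R (D - B)"
      unfolding affine_hull_2_alt by blast
    have "(t' - t) *\<^sub>R (C - A) = M' - M"
      unfolding M_AC M'_AC by (simp add: algebra_simps)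
    also have "\<dots> = (r' - r) *\<^sub>R (D - B)"
      unfolding M_BD M'_BD by (simp add: algebra_simps)
    finally have "(t' - t) *\<^sub>R (C - A) = (r' - r) *\<^sub>R (D - B)" .
    with indep M_AC M'_AC show "M' = M" by force
  qed
  moreover have "t \<noteq> 0" "t \<noteq> 1" "r \<noteq> 0" "r \<noteq> 1" using M_AC M_BD M_new by auto
  moreover have "A \<noteq> C" "B \<noteq> D" using distinct by auto
  ultimately show thesis using M_AC M_BD indep dlen_ratio[of M A t C] dlen_ratio[of M B r D]
    by (intro that[of t r]) (auto simp: diag_ratios_def)
qed

lemma par_scale:
  assumes "par v w" "v \<noteq> 0" "w \<noteq> 0"
  shows "\<exists>k. v = k *\<^sub>R w"
proof -
  from assms obtain c where c: "w = c *\<^sub>R v" unfolding par_def collinear_lemma by auto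
  with assms have "c \<noteq> 0" by auto
  with c show ?thesis by (intro exI[of _ "inverse c"]) auto
qed

text \<open>Dual quadrilaterals: if the diagonals of \<open>ABCD\<close> meet with parameters \<open>t, r\<close>, the edges of
  a dual quadrilateral are the edges of \<open>ABCD\<close> scaled by \<open>a\<close>, \<open>-a t/(1-t)\<close>,
  \<open>a t r/((1-t)(1-r))\<close> and \<open>-a r/(1-r)\<close>: parallelism of the diagonals of the dual to the
  opposite diagonals forces these ratios.\<close>
lemma dual_quad_coeffs:
  fixes A B C D A' B' C' D' :: "real^'n"
  assumes dual: "dual_quad A B C D A' B' C' D'"
    and dist: "distinct [A, B, C, D]" and dist': "distinct [A', B', C', D']"
    and M_AC: "M = A + t *\<^sub>R (C - A)" and M_BD: "M = B + r *\<^sub>R (D - B)"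
    and "t \<noteq> 0" "t \<noteq> 1" "r \<noteq> 1"
    and indep: "\<And>p q. p *\<^sub>R (C - A) = q *\<^sub>R (D - B) \<Longrightarrow> p = 0 \<and> q = 0"
  obtains a where "a \<noteq> 0" "B' - A' = a *\<^sub>R (B - A)"
    "C' - B' = (- a * t / (1 - t)) *\<^sub>R (C - B)"
    "D' - C' = (a * t * r / ((1 - t) * (1 - r))) *\<^sub>R (D - C)"
    "A' - D' = (- a * r / (1 - r)) *\<^sub>R (A - D)"
proof -
  from dual have pars: "par (B' - A') (B - A)" "par (C' - B') (C - B)" "par (D' - C') (D - C)"
    "par (A' - D') (A - D)" "par (C' - A') (D - B)" "par (D' - B') (C - A)"
    unfolding dual_quad_def by auto
  obtain a where a: "B' - A' = a *\<^sub>R (B - A)" using par_scale[OF pars(1)] dist dist' by auto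
  obtain b where b: "C' - B' = b *\<^sub>R (C - B)" using par_scale[OF pars(2)] dist dist' by auto
  obtain c where c: "D' - C' = c *\<^sub>R (D - C)" using par_scale[OF pars(3)] dist dist' by auto
  obtain d where d: "A' - D' = d *\<^sub>R (A - D)" using par_scale[OF pars(4)] dist dist' by auto
  obtain x where x: "C' - A' = x *\<^sub>R (D - B)" using par_scale[OF pars(5)] dist dist' by auto
  obtain y where y: "D' - B' = y *\<^sub>R (C - A)" using par_scale[OF pars(6)] dist dist' by auto
  have BA: "B - A = t *\<^sub>R (C - A) - r *\<^sub>R (D - B)"
    and CB: "C - B = (1 - t) *\<^sub>R (C - A) + r *\<^sub>R (D - B)"
    and DC: "D - C = (1 - r) *\<^sub>R (D - B) - (1 - t) *\<^sub>R (C - A)"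
    and AD: "A - D = - t *\<^sub>R (C - A) - (1 - r) *\<^sub>R (D - B)"
    using M_AC M_BD by (simp_all add: algebra_simps)
  have "x *\<^sub>R (D - B) = (B' - A') + (C' - B')" using x by simp
  then have "x *\<^sub>R (D - B) = (a * t + b * (1 - t)) *\<^sub>R (C - A) + (b * r - a * r) *\<^sub>R (D - B)"
    unfolding a b BA CB by (simp add: algebra_simps)
  then have "(a * t + b * (1 - t)) *\<^sub>R (C - A) = (x - (b * r - a * r)) *\<^sub>R (D - B)"
    by (simp add: algebra_simps)
  then have e1: "a * t + b * (1 - t) = 0" using indep by blast
  have "y *\<^sub>R (C - A) = (C' - B') + (D' - C')" using y by simp
  then have "y *\<^sub>R (C - A) = (b * (1 - t) - c * (1 - t)) *\<^sub>R (C - A) + (b * r + c * (1 - r)) *\<^sub>R (D - B)"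
    unfolding b c CB DC by (simp add: algebra_simps)
  then have "(y - (b * (1 - t) - c * (1 - t))) *\<^sub>R (C - A) = (b * r + c * (1 - r)) *\<^sub>R (D - B)"
    by (simp add: algebra_simps)
  then have e2: "b * r + c * (1 - r) = 0" using indep by blast
  have "(B' - A') + (C' - B') + (D' - C') + (A' - D') = 0" by simp
  then have "(a * t + b * (1 - t) - c * (1 - t) - d * t) *\<^sub>R (C - A)
      = (a * r - b * r - c * (1 - r) + d * (1 - r)) *\<^sub>R (D - B)"
    using a b c d BA CB DC AD by (simp add: algebra_simps)
  then have e3: "a * t + b * (1 - t) - c * (1 - t) - d * t = 0" using indep by blast
  have "1 - t \<noteq> 0" "1 - r \<noteq> 0" using \<open>t \<noteq> 1\<close> \<open>r \<noteq> 1\<close> by auto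
  have "a \<noteq> 0" using a dist dist' by auto
  moreover have b_eq: "b = - a * t / (1 - t)" using e1 \<open>1 - t \<noteq> 0\<close> by (simp add: field_simps)
  moreover have c_eq: "c = a * t * r / ((1 - t) * (1 - r))"
  proof -
    have "c = - b * r / (1 - r)" using e2 \<open>1 - r \<noteq> 0\<close> by (simp add: field_simps)
    with b_eq show ?thesis by simp
  qed
  moreover have "d = - a * r / (1 - r)"
  proof -
    have "d = - c * (1 - t) / t" using e1 e3 \<open>t \<noteq> 0\<close> by (simp add: field_simps)
    with c_eq \<open>1 - t \<noteq> 0\<close> \<open>t \<noteq> 0\<close> show ?thesis by simp
  qed
  ultimately show thesis using a b c d by (intro that[of a]) auto
qed

lemma norm_combination_squared:
  fixes v w :: "real^'n"
  shows "(norm (x *\<^sub>R v + y *\<^sub>R w))\<^sup>2 = x\<^sup>2 * (v \<bullet> v) + 2 * x * y * (v \<bullet> w) + y\<^sup>2 * (w \<bullet> w)"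
  unfolding power2_norm_eq_inner
  by (simp add: inner_add_left inner_add_right inner_commute algebra_simps power2_eq_square)

lemma chord_power:
  fixes A C M c :: "real^'n"
  assumes "dist c A = R" "dist c C = R" and M: "M = A + t *\<^sub>R (C - A)"
  shows "(norm (M - c))\<^sup>2 + t * (1 - t) * (norm (C - A))\<^sup>2 = R\<^sup>2"
proof -
  define a where "a = A - c"
  define b where "b = C - c"
  have radii: "a \<bullet> a = R\<^sup>2" "b \<bullet> b = R\<^sup>2"
    using assms(1,2) unfolding a_def b_def dist_norm power2_norm_eq_inner[symmetric]
    by (simp_all add: norm_minus_commute)
  have Mc: "M - c = (1 - t) *\<^sub>R a + t *\<^sub>R b" and CA: "C - A = 1 *\<^sub>R b + (- 1) *\<^sub>R a"
    unfolding M a_def b_def by (simp_all add: algebra_simps)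
  show ?thesis
    unfolding Mc CA norm_combination_squared using radii by (simp add: inner_commute algebra_simps power2_eq_square)
qed

lemma intersecting_chords:
  fixes A B C D :: "real^'n"
  assumes "concyclic A B C D"
    and "M = A + t *\<^sub>R (C - A)" "M = B + r *\<^sub>R (D - B)"
  shows "t * (1 - t) * (norm (C - A))\<^sup>2 = r * (1 - r) * (norm (D - B))\<^sup>2"
proof -
  from assms(1) obtain c R where "dist c A = R" "dist c B = R" "dist c C = R" "dist c D = R"
    unfolding concyclic_def by blast
  with chord_power[of c A R C M t] chord_power[of c B R D M r] assms(2,3) show ?thesis by simp
qed

text \<open>In a circular quadrilateral with diagonal parameters \<open>t, r\<close> the opposite edges satisfy
  \<open>|B - A|\<^sup>2 (1 - t)(1 - r) = t r |D - C|\<^sup>2\<close> (similar triangles \<open>MAB\<close> and \<open>MDC\<close>).\<close>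
lemma concyclic_opposite_edges:
  fixes A B C D :: "real^'n"
  assumes cyc: "concyclic A B C D"
    and M_AC: "M = A + t *\<^sub>R (C - A)" and M_BD: "M = B + r *\<^sub>R (D - B)"
  shows "(norm (B - A))\<^sup>2 * ((1 - t) * (1 - r)) = t * r * (norm (D - C))\<^sup>2"
proof -
  define X Y Z where "X = (C - A) \<bullet> (C - A)" and "Y = (D - B) \<bullet> (D - B)"
    and "Z = (C - A) \<bullet> (D - B)"
  have chords: "t * (1 - t) * X = r * (1 - r) * Y"
    using intersecting_chords[OF cyc M_AC M_BD] unfolding X_def Y_def power2_norm_eq_inner .
  have BA: "B - A = t *\<^sub>R (C - A) + (- r) *\<^sub>R (D - B)"
    and DC: "D - C = (- (1 - t)) *\<^sub>R (C - A) + (1 - r) *\<^sub>R (D - B)"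
    using M_AC M_BD by (simp_all add: algebra_simps)
  have "(norm (B - A))\<^sup>2 = t\<^sup>2 * X - 2 * t * r * Z + r\<^sup>2 * Y"
    unfolding BA X_def Y_def Z_def norm_combination_squared by simp
  moreover have "(norm (D - C))\<^sup>2 = (1 - t)\<^sup>2 * X - 2 * (1 - t) * (1 - r) * Z + (1 - r)\<^sup>2 * Y"
    unfolding DC X_def Y_def Z_def norm_combination_squared by (simp add: power2_eq_square algebra_simps)
  moreover have "(t\<^sup>2 * X - 2 * t * r * Z + r\<^sup>2 * Y) * ((1 - t) * (1 - r))
      - t * r * ((1 - t)\<^sup>2 * X - 2 * (1 - t) * (1 - r) * Z + (1 - r)\<^sup>2 * Y)
      = (t - r) * (t * (1 - t) * X - r * (1 - r) * Y)"
    by (simp add: algebra_simps power2_eq_square)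
  ultimately show ?thesis using chords by simp
qed

lemma ratio_cond_iff:
  "ratio_cond f s \<longleftrightarrow> (\<forall>u i j. i \<noteq> j \<longrightarrow>
     diag_ratios (f u) (f (u + unitv i)) (f (u + unitv i + unitv j)) (f (u + unitv j))
       = (s (u + unitv i + unitv j) / s u, s (u + unitv j) / s (u + unitv i)))"
  unfolding ratio_cond_def diag_ratios_def Let_def by simp

text \<open>On black
  points \<open>1/\<nu>\<close> and on white points \<open>\<nu>\<close> is a potential of a closed multiplicative 1-form.\<close>
lemma edge_product_potential:
  fixes g :: "int^'m::finite \<Rightarrow> 'm \<Rightarrow> real"
  assumes nz: "\<And>x i. g x i \<noteq> 0"
    and closed: "\<And>x i j. g x i * g (x + unitv j) i = g x j * g (x + unitv i) j"
  shows "\<exists>\<nu>. (\<forall>x. \<nu> x \<noteq> 0) \<and> (\<forall>x i. \<nu> x * \<nu> (x + unitv i) = g x i)"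
proof -
  define G where "G x i = (if black x then g x i else inverse (g x i))" for x i
  have "G x i \<noteq> 0" for x i unfolding G_def using nz by simp
  moreover have "G x i * G (x + unitv i) j = G x j * G (x + unitv j) i" for x i j
    unfolding G_def black_add_unitv using nz closed[of x i j] by (simp add: field_simps)
  ultimately obtain h where hnz: "\<And>x. h x \<noteq> 0" and h: "\<And>x i. h (x + unitv i) = G x i * h x"
    using discrete_potential[of G] by blast
  define \<nu> where "\<nu> x = (if black x then inverse (h x) else h x)" for x
  have "\<nu> x * \<nu> (x + unitv i) = g x i" for x i
    unfolding \<nu>_def h G_def black_add_unitv using hnz nz by (simp add: field_simps)
  moreover have "\<nu> x \<noteq> 0" for x unfolding \<nu>_def using hnz by simp
  ultimately show ?thesis by blast
qed

definition dual_scale ::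
    "(int^'m::finite \<Rightarrow> real^'n) \<Rightarrow> (int^'m \<Rightarrow> real^'n) \<Rightarrow> int^'m \<Rightarrow> 'm \<Rightarrow> real" where
  "dual_scale f fs u i = (SOME a. fs (u + unitv i) - fs u = a *\<^sub>R (f (u + unitv i) - f u))"

lemma dual_scale_eq:
  assumes "f (u + unitv i) \<noteq> f u" and "fs (u + unitv i) - fs u = a *\<^sub>R (f (u + unitv i) - f u)"
  shows "dual_scale f fs u i = a"
  unfolding dual_scale_def
proof (rule some_equality)
  fix b assume "fs (u + unitv i) - fs u = b *\<^sub>R (f (u + unitv i) - f u)"
  with assms show "b = a" by (metis eq_iff_diff_eq_0 scaleR_cancel_right)
qed (fact assms(2))

lemma dual_scale_quad:
  fixes f fs :: "int^'m::finite \<Rightarrow> real^'n"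
  assumes Q: "Qnet f" and Qs: "Qnet fs" and ij: "i \<noteq> j"
    and dual: "dual_quad (f u) (f (u + unitv i)) (f (u + unitv i + unitv j)) (f (u + unitv j))
                 (fs u) (fs (u + unitv i)) (fs (u + unitv i + unitv j)) (fs (u + unitv j))"
  defines "g \<equiv> dual_scale f fs"
  shows "g u i \<noteq> 0"
    and "diag_ratios (f u) (f (u + unitv i)) (f (u + unitv i + unitv j)) (f (u + unitv j))
           = (g u i / g (u + unitv i) j, g (u + unitv i) j / g (u + unitv j) i)"
    and "g u i * g (u + unitv j) i = g u j * g (u + unitv i) j"
proof -
  let ?A = "f u" and ?B = "f (u + unitv i)" and ?C = "f (u + unitv i + unitv j)"
    and ?D = "f (u + unitv j)"
  have quad: "nondeg_planar_quad ?A ?B ?C ?D" using Q ij unfolding Qnet_def by blast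
  then have dist: "distinct [?A, ?B, ?C, ?D]" unfolding nondeg_planar_quad_def by blast
  have dist': "distinct [fs u, fs (u + unitv i), fs (u + unitv i + unitv j), fs (u + unitv j)]"
    using Qs ij unfolding Qnet_def nondeg_planar_quad_def by blast
  obtain t r where M_AC: "diag_point ?A ?B ?C ?D = ?A + t *\<^sub>R (?C - ?A)"
    and M_BD: "diag_point ?A ?B ?C ?D = ?B + r *\<^sub>R (?D - ?B)"
    and t: "t \<noteq> 0" "t \<noteq> 1" and r: "r \<noteq> 0" "r \<noteq> 1"
    and indep: "\<And>p q. p *\<^sub>R (?C - ?A) = q *\<^sub>R (?D - ?B) \<Longrightarrow> p = 0 \<and> q = 0"
    and ratios: "diag_ratios ?A ?B ?C ?D = ((t - 1) / t, (r - 1) / r)"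
    using nondeg_quad_diagonals[OF quad] by blast
  obtain a where "a \<noteq> 0"
    and a: "fs (u + unitv i) - fs u = a *\<^sub>R (?B - ?A)"
    and b: "fs (u + unitv i + unitv j) - fs (u + unitv i) = (- a * t / (1 - t)) *\<^sub>R (?C - ?B)"
    and c: "fs (u + unitv j) - fs (u + unitv i + unitv j) = (a * t * r / ((1 - t) * (1 - r))) *\<^sub>R (?D - ?C)"
    and d: "fs u - fs (u + unitv j) = (- a * r / (1 - r)) *\<^sub>R (?A - ?D)"
    using dual_quad_coeffs[OF dual dist dist' M_AC M_BD t \<open>r \<noteq> 1\<close> indep] by blast
  have comm: "u + unitv j + unitv i = u + unitv i + unitv j" by (rule unitv_commute)
  have ga: "g u i = a" unfolding g_def using a dist by (intro dual_scale_eq) auto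
  have gb: "g (u + unitv i) j = - a * t / (1 - t)" unfolding g_def using b dist by (intro dual_scale_eq) auto
  have gc: "g (u + unitv j) i = a * t * r / ((1 - t) * (1 - r))"
    unfolding g_def using c dist comm by (intro dual_scale_eq) (auto simp: algebra_simps)
  have gd: "g u j = - a * r / (1 - r)"
    unfolding g_def using d dist by (intro dual_scale_eq) (auto simp: algebra_simps)
  have "1 - t \<noteq> 0" "1 - r \<noteq> 0" using t r by auto
  then show "g u i \<noteq> 0"
    and "diag_ratios ?A ?B ?C ?D = (g u i / g (u + unitv i) j, g (u + unitv i) j / g (u + unitv j) i)"
    and "g u i * g (u + unitv j) i = g u j * g (u + unitv i) j"
    unfolding ratios ga gb gc gd using \<open>a \<noteq> 0\<close> t r by (simp_all add: field_simps)
qed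

text \<open>If \<open>x y = 1/a\<close> and \<open>y z = 1/b\<close> then \<open>z/x = a/b\<close>: how products of \<open>s\<close> along two
  consecutive edges determine the ratio of \<open>s\<close> at their ends.\<close>
lemma ratio_of_edge_products:
  fixes a b x y z :: real
  assumes "x * y = inverse a" "y * z = inverse b" "y \<noteq> 0" "a \<noteq> 0" "b \<noteq> 0"
  shows "z / x = a / b"
proof -
  have "z = inverse b / y" "x = inverse a / y" using assms by (simp_all add: field_simps)
  with assms show ?thesis by (simp add: divide_inverse)
qed

text \<open>Existence of \<open>s\<close> for a Koenigs net: take \<open>s(u) s(u + e\<^sub>i) = 1 / g\<^sub>i(u)\<close>, \<open>g\<close> the scaling
  factors of the dual net.\<close>
lemma koenigs_ratio_solution:
  fixes f :: "int^'m::finite \<Rightarrow> real^'n"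
  assumes m2: "CARD('m) \<ge> 2" and "koenigs f"
  obtains s where "\<forall>u. s u \<noteq> 0" and "ratio_cond f s"
proof -
  from \<open>koenigs f\<close> obtain fs :: "int^'m \<Rightarrow> real^'n" where Q: "Qnet f" and Qs: "Qnet fs"
    and dual: "\<And>u i j. i \<noteq> j \<Longrightarrow>
        dual_quad (f u) (f (u + unitv i)) (f (u + unitv i + unitv j)) (f (u + unitv j))
                  (fs u) (fs (u + unitv i)) (fs (u + unitv i + unitv j)) (fs (u + unitv j))"
    unfolding koenigs_def by blast
  define g where "g = dual_scale f fs"
  note quad = dual_scale_quad[OF Q Qs _ dual, folded g_def]
  have gnz: "g u i \<noteq> 0" for u i
    using exists_other_direction[OF m2, of i] quad(1) by metis
  have "g u i * g (u + unitv j) i = g u j * g (u + unitv i) j" for u i j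
    using quad(3)[of i j u] by (cases "i = j") auto
  then have "inverse (g u i) * inverse (g (u + unitv j) i) = inverse (g u j) * inverse (g (u + unitv i) j)"
    for u i j by (metis inverse_mult_distrib)
  then obtain s where snz: "\<forall>x. s x \<noteq> 0" and s: "\<And>x i. s x * s (x + unitv i) = inverse (g x i)"
    using edge_product_potential[of "\<lambda>x i. inverse (g x i)"] gnz by auto
  have "ratio_cond f s"
    unfolding ratio_cond_iff
  proof (intro allI impI)
    fix u i j assume ij: "(i::'m) \<noteq> j"
    have "s (u + unitv i + unitv j) * s (u + unitv j) = inverse (g (u + unitv j) i)"
      using s[of "u + unitv j" i] by (simp add: unitv_commute mult.commute)
    then have "s (u + unitv j) / s (u + unitv i) = g (u + unitv i) j / g (u + unitv j) i"
      using s[of "u + unitv i" j] snz gnz by (intro ratio_of_edge_products) auto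
    moreover have "s (u + unitv i + unitv j) / s u = g u i / g (u + unitv i) j"
      using s[of u i] s[of "u + unitv i" j] snz gnz by (intro ratio_of_edge_products) auto
    ultimately show "diag_ratios (f u) (f (u + unitv i)) (f (u + unitv i + unitv j)) (f (u + unitv j))
        = (s (u + unitv i + unitv j) / s u, s (u + unitv j) / s (u + unitv i))"
      unfolding quad(2)[OF ij ij] by simp
  qed
  with snz show thesis by (rule that)
qed

lemma div_eq_div_swap:
  fixes x y x' y' :: real
  assumes "x / y = x' / y'" "x \<noteq> 0" "y \<noteq> 0" "x' \<noteq> 0" "y' \<noteq> 0"
  shows "x' / x = y' / y"
  using assms by (simp add: field_simps)

text \<open>Uniqueness: the quotient of two solutions is invariant under \<open>e\<^sub>i + e\<^sub>j\<close> and takes one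
  value on all neighbours of a point, hence is constant on each colour class.\<close>
lemma ratio_cond_unique:
  fixes f :: "int^'m::finite \<Rightarrow> real^'n"
  assumes m2: "CARD('m) \<ge> 2"
    and snz: "\<forall>u. s u \<noteq> 0" and s: "ratio_cond f s"
    and s'nz: "\<forall>u. s' u \<noteq> 0" and s': "ratio_cond f s'"
  shows "\<exists>lam mu. lam \<noteq> 0 \<and> mu \<noteq> 0 \<and> (\<forall>u. s' u = (if black u then lam else mu) * s u)"
proof -
  define \<phi> where "\<phi> u = s' u / s u" for u
  have diag: "\<phi> (u + unitv i + unitv j) = \<phi> u" and nb: "\<phi> (u + unitv j) = \<phi> (u + unitv i)"
    if "i \<noteq> j" for u i j
  proof -
    have eq_diag: "s (u + unitv i + unitv j) / s u = s' (u + unitv i + unitv j) / s' u"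
      and eq_nb: "s (u + unitv j) / s (u + unitv i) = s' (u + unitv j) / s' (u + unitv i)"
      using s[unfolded ratio_cond_iff, rule_format, OF that, of u]
        s'[unfolded ratio_cond_iff, rule_format, OF that, of u] by auto
    show "\<phi> (u + unitv i + unitv j) = \<phi> u"
      unfolding \<phi>_def by (rule div_eq_div_swap[OF eq_diag]) (use snz s'nz in auto)
    show "\<phi> (u + unitv j) = \<phi> (u + unitv i)"
      unfolding \<phi>_def by (rule div_eq_div_swap[OF eq_nb]) (use snz s'nz in auto)
  qed
  have nb_all: "\<phi> (u + unitv i) = \<phi> (u + unitv j)" for u i j
    using nb[of j i u] by (cases "i = j") auto
  have diag_all: "\<phi> (u + unitv i + unitv j) = \<phi> u" for u i j
  proof (cases "i = j")
    case True
    obtain k where "k \<noteq> i" using exists_other_direction[OF m2] by blast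
    then show ?thesis
      using True nb_all[of "u + unitv i" j k] diag[of i k u] by simp
  qed (use diag in blast)
  fix k :: 'm
  have "\<phi> u = (if black u then \<phi> 0 else \<phi> (unitv k))" for u
    by (rule parity_constant[OF nb_all diag_all])
  moreover have "s' u = \<phi> u * s u" for u unfolding \<phi>_def using snz by simp
  ultimately have "\<forall>u. s' u = (if black u then \<phi> 0 else \<phi> (unitv k)) * s u" by simp
  moreover have "\<phi> 0 \<noteq> 0" "\<phi> (unitv k) \<noteq> 0" unfolding \<phi>_def using snz s'nz by auto
  ultimately show ?thesis by blast
qed

text \<open>Conversely, rescaling by a constant on each colour class preserves the ratio conditions,
  since both ratios compare points of equal colour.\<close>
lemma ratio_cond_rescale:
  assumes s: "ratio_cond f s" and s': "\<forall>u. s' u = (if black u then lam else mu) * s u"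
    and "lam \<noteq> 0" "mu \<noteq> 0"
  shows "ratio_cond f s'"
  unfolding ratio_cond_iff
proof (intro allI impI)
  fix u i j assume "(i::'a) \<noteq> j"
  have "black (u + unitv i + unitv j) \<longleftrightarrow> black u"
    and "black (u + unitv j) \<longleftrightarrow> black (u + unitv i)" by (simp_all add: black_add_unitv)
  then have "s' (u + unitv i + unitv j) / s' u = s (u + unitv i + unitv j) / s u"
    and "s' (u + unitv j) / s' (u + unitv i) = s (u + unitv j) / s (u + unitv i)"
    unfolding s'[rule_format] using assms(3,4) by simp_all
  then show "diag_ratios (f u) (f (u + unitv i)) (f (u + unitv i + unitv j)) (f (u + unitv j))
      = (s' (u + unitv i + unitv j) / s' u, s' (u + unitv j) / s' (u + unitv i))"
    using s[unfolded ratio_cond_iff, rule_format, OF \<open>i \<noteq> j\<close>, of u] by simp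
qed

lemma ratio_cond_solutions:
  fixes f :: "int^'m::finite \<Rightarrow> real^'n"
  assumes m2: "CARD('m) \<ge> 2" and snz: "\<forall>u. s u \<noteq> 0" and s: "ratio_cond f s"
  shows "((\<forall>u. s' u \<noteq> 0) \<and> ratio_cond f s') \<longleftrightarrow>
    (\<exists>lam mu. lam \<noteq> 0 \<and> mu \<noteq> 0 \<and> (\<forall>u. s' u = (if black u then lam else mu) * s u))"
proof
  assume "(\<forall>u. s' u \<noteq> 0) \<and> ratio_cond f s'"
  then show "\<exists>lam mu. lam \<noteq> 0 \<and> mu \<noteq> 0 \<and> (\<forall>u. s' u = (if black u then lam else mu) * s u)"
    using ratio_cond_unique[OF m2 snz s] by blast
next
  assume "\<exists>lam mu. lam \<noteq> 0 \<and> mu \<noteq> 0 \<and> (\<forall>u. s' u = (if black u then lam else mu) * s u)"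
  then obtain lam mu where nz: "lam \<noteq> 0" "mu \<noteq> 0"
    and s': "\<forall>u. s' u = (if black u then lam else mu) * s u" by blast
  have "\<forall>u. s' u \<noteq> 0" using s' snz nz by simp
  moreover have "ratio_cond f s'" using ratio_cond_rescale[OF s s' nz] .
  ultimately show "(\<forall>u. s' u \<noteq> 0) \<and> ratio_cond f s'" ..
qed

lemma edge_weight_identity:
  fixes sA sB sC sD t r P Q :: real
  assumes sC: "sC = sA * ((t - 1) / t)" and sD: "sD = sB * ((r - 1) / r)"
    and "t \<noteq> 0" "t \<noteq> 1" "r \<noteq> 0" "r \<noteq> 1" "sA \<noteq> 0" "sB \<noteq> 0"
    and PQ: "P * ((1 - t) * (1 - r)) = t * r * Q"
  shows "Q / (sD * sC) = P / (sA * sB)"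
proof -
  define K where "K = ((t - 1) / t) * ((r - 1) / r)"
  have "K \<noteq> 0" unfolding K_def using assms by simp
  have "sD * sC = (sA * sB) * K" unfolding K_def sC sD by (simp add: mult_ac)
  moreover have "Q = P * K"
  proof -
    have "Q * (t * r) = P * ((t - 1) * (r - 1))" using PQ by (simp add: algebra_simps)
    then show ?thesis unfolding K_def using assms by (simp add: field_simps)
  qed
  ultimately show ?thesis using \<open>K \<noteq> 0\<close> assms by simp
qed

text \<open>For a circular net the quantities \<open>|f\<^sub>i - f|\<^sup>2 / (s s\<^sub>i)\<close> are equal on opposite edges of
  every quadrilateral: this combines the diagonal ratios of \<open>s\<close> with the relation between
  opposite edges of a circular quadrilateral.\<close>
lemma circular_edge_labelling:
  fixes f :: "int^'m::finite \<Rightarrow> real^'n"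
  assumes circ: "circular f" and snz: "\<forall>u. s u \<noteq> 0" and s: "ratio_cond f s" and ij: "i \<noteq> j"
  shows "(norm (f (u + unitv j + unitv i) - f (u + unitv j)))\<^sup>2 / (s (u + unitv j) * s (u + unitv j + unitv i))
       = (norm (f (u + unitv i) - f u))\<^sup>2 / (s u * s (u + unitv i))"
proof -
  let ?A = "f u" and ?B = "f (u + unitv i)" and ?C = "f (u + unitv i + unitv j)"
    and ?D = "f (u + unitv j)"
  have Q: "Qnet f" and cyc_all: "\<forall>u i j. i \<noteq> j \<longrightarrow>
      concyclic (f u) (f (u + unitv i)) (f (u + unitv i + unitv j)) (f (u + unitv j))"
    using circ unfolding circular_def by auto
  have quad: "nondeg_planar_quad ?A ?B ?C ?D" using Q[unfolded Qnet_def, rule_format, OF ij] .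
  have cyc: "concyclic ?A ?B ?C ?D" using cyc_all[rule_format, OF ij] .
  obtain t r where M_AC: "diag_point ?A ?B ?C ?D = ?A + t *\<^sub>R (?C - ?A)"
    and M_BD: "diag_point ?A ?B ?C ?D = ?B + r *\<^sub>R (?D - ?B)"
    and t: "t \<noteq> 0" "t \<noteq> 1" and r: "r \<noteq> 0" "r \<noteq> 1"
    and "\<And>p q. p *\<^sub>R (?C - ?A) = q *\<^sub>R (?D - ?B) \<Longrightarrow> p = 0 \<and> q = 0"
    and ratios: "diag_ratios ?A ?B ?C ?D = ((t - 1) / t, (r - 1) / r)"
    using nondeg_quad_diagonals[OF quad] by blast
  have "s (u + unitv i + unitv j) / s u = (t - 1) / t"
    and "s (u + unitv j) / s (u + unitv i) = (r - 1) / r"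
    using s[unfolded ratio_cond_iff, rule_format, OF ij, of u] ratios by auto
  then have s_ij: "s (u + unitv i + unitv j) = s u * ((t - 1) / t)"
    and s_j: "s (u + unitv j) = s (u + unitv i) * ((r - 1) / r)"
    using snz by (simp_all add: divide_eq_eq)
  have "(norm (?B - ?A))\<^sup>2 * ((1 - t) * (1 - r)) = t * r * (norm (?D - ?C))\<^sup>2"
    by (rule concyclic_opposite_edges[OF cyc M_AC M_BD])
  then have "(norm (?D - ?C))\<^sup>2 / (s (u + unitv j) * s (u + unitv i + unitv j))
      = (norm (?B - ?A))\<^sup>2 / (s u * s (u + unitv i))"
    using edge_weight_identity[OF s_ij s_j t r] snz by simp
  then show ?thesis by (simp add: unitv_commute[of u j i] norm_minus_commute)
qed

text \<open>Changing \<open>s\<close> by \<open>\<lambda>\<close> on black and \<open>\<mu>\<close> on white points divides every edge weight by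
  \<open>\<lambda> \<mu>\<close>, since each edge joins a black and a white point.\<close>
lemma edge_weight_rescale:
  fixes x lam mu :: real
  shows "x / ((if black u then lam else mu) * s u * ((if black (u + unitv i) then lam else mu) * s (u + unitv i)))
     = inverse (lam * mu) * (x / (s u * s (u + unitv i)))"
proof -
  have "(if black u then lam else mu) * (if black (u + unitv i) then lam else mu) = lam * mu"
    by (simp add: black_add_unitv)
  then have denominator: "(if black u then lam else mu) * s u * ((if black (u + unitv i) then lam else mu) * s (u + unitv i))
      = (lam * mu) * (s u * s (u + unitv i))"
    by (metis mult.assoc mult.left_commute)
  show ?thesis unfolding denominator by (simp add: divide_inverse)
qed

lemma isothermic_edge_labelling:
  fixes f :: "int^'m::finite \<Rightarrow> real^'n"
  assumes circ: "circular f" and snz: "\<forall>u. s u \<noteq> 0" and s: "ratio_cond f s"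
  shows "let \<alpha> = (\<lambda>i u. (norm (f (u + unitv i) - f u))\<^sup>2 / (s u * s (u + unitv i)))
     in (\<forall>i j u. i \<noteq> j \<longrightarrow> \<alpha> i (u + unitv j) = \<alpha> i u)
      \<and> (\<forall>i u. (norm (f (u + unitv i) - f u))\<^sup>2 = \<alpha> i u * s u * s (u + unitv i))
      \<and> (\<forall>lam mu. lam \<noteq> 0 \<and> mu \<noteq> 0 \<longrightarrow>
           (let s' = (\<lambda>u. (if black u then lam else mu) * s u)
            in \<forall>i u. (norm (f (u + unitv i) - f u))\<^sup>2 / (s' u * s' (u + unitv i))
                     = inverse (lam * mu) * \<alpha> i u))"
proof -
  have "(norm (f (u + unitv i) - f u))\<^sup>2
      = (norm (f (u + unitv i) - f u))\<^sup>2 / (s u * s (u + unitv i)) * s u * s (u + unitv i)" for i u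
    using snz by simp
  then show ?thesis
    using circular_edge_labelling[OF circ snz s] unfolding Let_def edge_weight_rescale by blast
qed

theorem mainTheorem15:
  fixes f :: "int^'m::finite \<Rightarrow> real^'n"
  assumes m2: "CARD('m) \<ge> 2"
    and iso: "isothermic f"
  shows "(\<exists>s. (\<forall>u. s u \<noteq> 0) \<and> ratio_cond f s \<and>
            (\<forall>s'. ((\<forall>u. s' u \<noteq> 0) \<and> ratio_cond f s') \<longleftrightarrow>
               (\<exists>lam mu. lam \<noteq> 0 \<and> mu \<noteq> 0 \<and>
                   (\<forall>u. s' u = (if black u then lam else mu) * s u))))
       \<and> (\<forall>s. (\<forall>u. s u \<noteq> 0) \<and> ratio_cond f s \<longrightarrow>
            (let \<alpha> = (\<lambda>i u. (norm (f (u + unitv i) - f u))\<^sup>2 / (s u * s (u + unitv i)))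
             in (\<forall>i j u. i \<noteq> j \<longrightarrow> \<alpha> i (u + unitv j) = \<alpha> i u)
              \<and> (\<forall>i u. (norm (f (u + unitv i) - f u))\<^sup>2 = \<alpha> i u * s u * s (u + unitv i))
              \<and> (\<forall>lam mu. lam \<noteq> 0 \<and> mu \<noteq> 0 \<longrightarrow>
                   (let s' = (\<lambda>u. (if black u then lam else mu) * s u)
                    in \<forall>i u. (norm (f (u + unitv i) - f u))\<^sup>2 / (s' u * s' (u + unitv i))
                             = inverse (lam * mu) * \<alpha> i u))))"
proof -
  have circ: "circular f" and "koenigs f" using iso unfolding isothermic_def by auto
  obtain s0 where s0nz: "\<forall>u. s0 u \<noteq> 0" and s0: "ratio_cond f s0"
    using koenigs_ratio_solution[OF m2 \<open>koenigs f\<close>] by blast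
  show ?thesis
  proof (intro conjI allI impI)
    show "\<exists>s. (\<forall>u. s u \<noteq> 0) \<and> ratio_cond f s \<and>
            (\<forall>s'. ((\<forall>u. s' u \<noteq> 0) \<and> ratio_cond f s') \<longleftrightarrow>
               (\<exists>lam mu. lam \<noteq> 0 \<and> mu \<noteq> 0 \<and> (\<forall>u. s' u = (if black u then lam else mu) * s u)))"
      using s0nz s0 ratio_cond_solutions[OF m2 s0nz s0] by blast
  qed (use isothermic_edge_labelling[OF circ] in blast)
qed

end
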